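(* Let $p$ be a prime greater than $3$ and let $u$ be a positive integer coprime to $p$. Let $a_1,a_2,a_3,\alpha_1,\alpha_2,\alpha_3$ be positive integers. Assume that the ternary diagonal $\mathbb{Z}$-lattice $\langle a_1,a_2,a_3\rangle$ is isometric over $\mathbb{Z}_p$ to $\langle 1,-\Delta_p\rangle\perp\langle p\epsilon_p\rangle$ for some $\epsilon_p\in\mathbb{Z}_p^\times$. Then there is an integer $v$ such that (i) $0<v<p^2$; (ii) $uv+a_1\alpha_1^2+a_2\alpha_2^2$ is not represented by $\langle a_1,a_2\rangle$ over $\mathbb{Z}_p$; (iii) $uv+a_1\alpha_1^2+a_2\alpha_2^2+a_3\alpha_3^2$ is represented by $\langle a_1,a_2,a_3\rangle$ over $\mathbb{Z}_p$; (iv) $\max\bigl(\mathrm{ord}_p(uv+a_1\alpha_1^2+a_2\alpha_2^2),\ \mathrm{ord}_p(uv+a_1\alpha_1^2+a_2\alpha_2^2+a_3\alpha_3^2)\bigr)\le 1$.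
   Context: $\Delta_p$ denotes a nonsquare unit of $\mathbb{Z}_p$. $\langle b_1,\dots,b_k\rangle$ denotes the lattice with diagonal Gram matrix with entries $b_1,\dots,b_k$ (quadratic form $b_1x_1^2+\cdots+b_kx_k^2$). An element $n$ is represented by such a lattice over $\mathbb{Z}_p$ if $n=b_1x_1^2+\cdots+b_kx_k^2$ for some $x_i\in\mathbb{Z}_p$. *)

theory Defs
  imports "HOL-Number_Theory.Number_Theory"
begin

text \<open>p-adic integers are modelled as coherent sequences of residues:
 x k is the residue of x modulo p^k (0 \<le> x k < p^k), and x (k+1) reduces to x k.
 An identity between polynomial expressions in p-adic integers holds in Z_p
 iff it holds modulo p^k at every level k.\<close>

definition padic :: "int \<Rightarrow> (nat \<Rightarrow> int) \<Rightarrow> bool" where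
  "padic p x \<longleftrightarrow> (\<forall>k. 0 \<le> x k \<and> x k < p ^ k) \<and> (\<forall>k. x (Suc k) mod p ^ k = x k)"

definition padic_unit :: "int \<Rightarrow> (nat \<Rightarrow> int) \<Rightarrow> bool" where
  "padic_unit p x \<longleftrightarrow> padic p x \<and> \<not> p dvd x 1"

definition padic_square :: "int \<Rightarrow> (nat \<Rightarrow> int) \<Rightarrow> bool" where
  "padic_square p x \<longleftrightarrow> (\<exists>y. padic p y \<and> (\<forall>k. [y k ^ 2 = x k] (mod p ^ k)))"

definition nonsquare_unit :: "int \<Rightarrow> (nat \<Rightarrow> int) \<Rightarrow> bool" where
  "nonsquare_unit p x \<longleftrightarrow> padic_unit p x \<and> \<not> padic_square p x"

definition zp_represents :: "int \<Rightarrow> int list \<Rightarrow> int \<Rightarrow> bool" where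
  "zp_represents p bs n \<longleftrightarrow>
     (\<exists>xs. length xs = length bs \<and> (\<forall>x\<in>set xs. padic p x) \<and>
       (\<forall>k. [(\<Sum>i<length bs. bs ! i * (xs ! i) k ^ 2) = n] (mod p ^ k)))"

definition det3 :: "(nat \<Rightarrow> nat \<Rightarrow> int) \<Rightarrow> int" where
  "det3 M = M 0 0 * (M 1 1 * M 2 2 - M 1 2 * M 2 1)
          - M 0 1 * (M 1 0 * M 2 2 - M 1 2 * M 2 0)
          + M 0 2 * (M 1 0 * M 2 1 - M 1 1 * M 2 0)"

text \<open>Isometry over Z_p of ternary diagonal lattices <a 0, a 1, a 2> and <b 0, b 1, b 2>
 with p-adic coefficients: there is T in GL_3(Z_p) with T^t diag(a) T = diag(b).\<close>
definition zp_isometric3 :: "int \<Rightarrow> (nat \<Rightarrow> nat \<Rightarrow> int) \<Rightarrow> (nat \<Rightarrow> nat \<Rightarrow> int) \<Rightarrow> bool" where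
  "zp_isometric3 p a b \<longleftrightarrow>
     (\<exists>T :: nat \<Rightarrow> nat \<Rightarrow> nat \<Rightarrow> int.
        (\<forall>i<3. \<forall>j<3. padic p (T i j)) \<and>
        \<not> p dvd det3 (\<lambda>i j. T i j 1) \<and>
        (\<forall>i<3. \<forall>j<3. \<forall>k.
           [(\<Sum>l<3. T l i k * a l k * T l j k) = (if i = j then b i k else 0)] (mod p ^ k)))"

definition zp_of_int :: "int \<Rightarrow> int \<Rightarrow> nat \<Rightarrow> int" where
  "zp_of_int p n = (\<lambda>k. n mod p ^ k)"

end

theory Submission
  imports Defs
begin

(*
  Write the isometry as T^t diag(a1, a2, a3) T = diag(1, -\<Delta>, p \<epsilon>) over Z_p.  Comparing
  determinants modulo p^2 shows that p divides a1 a2 a3 exactly once, so exactly one a_i is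
  divisible by p.

  If it is a3 = p b, the leading 2x2 minor of the Gram matrix gives a1 a2 m^2 = -\<Delta> mod p, so
  -a1 a2 is a nonresidue and <a1, a2> is anisotropic mod p: every value it takes that is
  divisible by p is divisible by p^2.  Choose v with
  u v + a1 \<alpha>1^2 + a2 \<alpha>2^2 = p b (r^2 - \<alpha>3^2) mod p^2, where r is 1 or 2 so that this has
  order exactly one; then <a1, a2> does not represent it, while adding a3 \<alpha>3^2 gives
  p b r^2 mod p^2, which a3 z^2 represents by Hensel's lemma.

  If p divides a1 (a2 is symmetric), <a1, a2> takes modulo p only the values a2 y^2, so it is
  enough to make u v + a1 \<alpha>1^2 + a2 \<alpha>2^2 congruent to a2 g s^2 (g a nonresidue, s = 1 or 2)
  while avoiding -a3 \<alpha>3^2; the resulting unit after adding a3 \<alpha>3^2 is represented by the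
  unimodular plane <a2, a3> (counting modulo p, then Hensel's lemma).
*)

section \<open>Hensel lifting\<close>

lemma padic_cong_Suc: "padic p x \<Longrightarrow> [x (Suc k) = x k] (mod p ^ k)"
  unfolding padic_def cong_def by (metis mod_mod_trivial)

lemma padic_zp_of_int: "p > 0 \<Longrightarrow> padic p (zp_of_int p c)"
  by (simp add: padic_def zp_of_int_def mod_mod_cancel le_imp_power_dvd)

lemma padic_from_lifts:
  fixes p :: int and P :: "nat \<Rightarrow> int \<Rightarrow> bool"
  assumes p: "p > 0" and start: "P 0 0"
    and invariant: "\<And>k x x'. [x = x'] (mod p ^ k) \<Longrightarrow> P k x \<Longrightarrow> P k x'"
    and lift: "\<And>k x. 0 \<le> x \<Longrightarrow> x < p ^ k \<Longrightarrow> P k x \<Longrightarrow> \<exists>x'. [x' = x] (mod p ^ k) \<and> P (Suc k) x'"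
  shows "\<exists>y. padic p y \<and> (\<forall>k. P k (y k))"
proof -
  define next_digit where
    "next_digit k x = (SOME x'. [x' = x] (mod p ^ k) \<and> P (Suc k) x') mod p ^ Suc k" for k x
  define y where "y = rec_nat 0 next_digit"
  have y_0: "y 0 = 0" and y_Suc: "y (Suc k) = next_digit k (y k)" for k
    by (simp_all add: y_def)
  have step: "[y (Suc k) = y k] (mod p ^ k) \<and> P (Suc k) (y (Suc k))"
    if "0 \<le> y k" "y k < p ^ k" "P k (y k)" for k
  proof -
    define x' where "x' = (SOME x'. [x' = y k] (mod p ^ k) \<and> P (Suc k) x')"
    have x': "[x' = y k] (mod p ^ k)" "P (Suc k) x'"
      using someI_ex[OF lift[OF that]] by (simp_all add: x'_def)
    have "y (Suc k) = x' mod p ^ Suc k"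
      by (simp add: y_Suc next_digit_def x'_def)
    moreover have "p ^ k dvd p ^ Suc k"
      by (simp add: le_imp_power_dvd)
    ultimately show ?thesis
      using x' invariant[of x' "x' mod p ^ Suc k" "Suc k"]
      by (metis cong_dvd_modulus cong_mod_rightI cong_refl cong_sym cong_trans)
  qed
  have bounded: "0 \<le> y k \<and> y k < p ^ k \<and> P k (y k)" for k
  proof (induction k)
    case 0
    then show ?case using start by (simp add: y_0)
  next
    case (Suc k)
    then show ?case using step[of k] p by (simp add: y_Suc next_digit_def)
  qed
  have "y (Suc k) mod p ^ k = y k" for k
    using step[of k] bounded[of k] bounded[of "Suc k"] by (simp add: cong_def)
  then have "padic p y"
    using bounded by (simp add: padic_def)
  then show ?thesis using bounded by blast
qed

lemma hensel_step:
  fixes p b x n :: int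
  assumes p: "prime p" "p > 2" and b: "\<not> p dvd b" and x: "\<not> p dvd x"
    and k: "k \<ge> 1" and sol: "[b * x^2 = n] (mod p ^ k)"
  shows "\<exists>x'. [x' = x] (mod p ^ k) \<and> [b * x'^2 = n] (mod p ^ Suc k)"
proof -
  obtain s where s: "n - b * x^2 = p ^ k * s"
    using sol by (metis cong_iff_dvd_diff cong_sym dvdE)
  have "\<not> p dvd 2 * b * x"
    using p b x by (auto simp: prime_dvd_mult_iff dest: zdvd_imp_le prime_ge_2_int)
  then have "coprime (2 * b * x) p"
    using p(1) by (metis prime_imp_coprime coprime_commute)
  then obtain w where w: "[2 * b * x * w = 1] (mod p)"
    using cong_solve_coprime_int by blast
  define t where "t = w * s"
  \<comment> \<open>Newton's correction: \<open>2 b x t p^k\<close> cancels the error \<open>p^k s\<close> modulo \<open>p^(k+1)\<close>\<close>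
  have "[2 * b * x * t = s] (mod p)"
    using cong_scalar_right[OF w, of s] by (simp add: t_def mult.assoc)
  then obtain q where q: "s - 2 * b * x * t = p * q"
    by (metis cong_iff_dvd_diff cong_sym dvdE)
  have "n - b * (x + t * p ^ k)^2 = p ^ Suc k * q - p ^ k * p ^ k * (b * t^2)"
    using s q by (simp add: power2_eq_square algebra_simps)
  moreover have "p ^ Suc k dvd p ^ k * p ^ k"
    using k by (simp add: mult_dvd_mono)
  ultimately have "p ^ Suc k dvd n - b * (x + t * p ^ k)^2"
    by (metis dvd_diff dvd_mult2 dvd_triv_left)
  then have "[b * (x + t * p ^ k)^2 = n] (mod p ^ Suc k)"
    by (metis cong_iff_dvd_diff cong_sym)
  moreover have "[x + t * p ^ k = x] (mod p ^ k)"
    by (simp add: cong_iff_dvd_diff)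
  ultimately show ?thesis by blast
qed

lemma hensel_lift:
  fixes p b r :: int and M :: "nat \<Rightarrow> int"
  assumes p: "prime p" "p > 2" and b: "\<not> p dvd b" and r: "\<not> p dvd r"
    and root: "[b * r^2 = M 1] (mod p)" and M: "\<And>k. [M (Suc k) = M k] (mod p ^ k)"
  shows "\<exists>y. padic p y \<and> (\<forall>k. [b * y k ^ 2 = M k] (mod p ^ k))"
proof -
  define P where "P k x \<longleftrightarrow> [b * x^2 = M k] (mod p ^ k) \<and> (k \<ge> 1 \<longrightarrow> \<not> p dvd x)" for k x
  have "\<exists>y. padic p y \<and> (\<forall>k. P k (y k))"
  proof (rule padic_from_lifts)
    show "p > 0" using p by simp
    show "P 0 0" by (simp add: P_def)
  next
    fix k x x'
    assume "[x = x'] (mod p ^ k)" "P k x"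
    moreover have "p dvd p ^ k" if "k \<ge> 1" using that by (simp add: dvd_power)
    ultimately show "P k x'"
      unfolding P_def by (meson cong_dvd_iff cong_dvd_modulus cong_pow cong_scalar_left cong_sym cong_trans)
  next
    fix k x
    assume x: "0 \<le> x" "x < p ^ k" "P k x"
    show "\<exists>x'. [x' = x] (mod p ^ k) \<and> P (Suc k) x'"
    proof (cases "k = 0")
      case True
      then show ?thesis using root r by (auto simp: P_def)
    next
      case False
      have unit: "\<not> p dvd x" and "[b * x^2 = M k] (mod p ^ k)"
        using x(3) False by (simp_all add: P_def)
      then have "[b * x^2 = M (Suc k)] (mod p ^ k)"
        using M[of k] by (meson cong_sym cong_trans)
      then obtain x' where x': "[x' = x] (mod p ^ k)" "[b * x'^2 = M (Suc k)] (mod p ^ Suc k)"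
        using hensel_step[OF p b unit] False by (metis less_one not_le)
      have "\<not> p dvd x'"
        using x'(1) unit False by (meson cong_dvd_iff cong_dvd_modulus dvd_power not_gr0)
      then show ?thesis using x' by (auto simp: P_def)
    qed
  qed
  then show ?thesis by (auto simp: P_def)
qed

section \<open>Quadratic residues and binary forms modulo p\<close>

lemma not_QuadRes_imp_not_dvd: "\<not> QuadRes p g \<Longrightarrow> \<not> p dvd g"
  unfolding QuadRes_def by (metis cong_0_iff cong_sym power_zero_numeral)

lemma not_QuadRes_mult_square:
  fixes p g s y :: int
  assumes p: "prime p" and g: "\<not> QuadRes p g" and s: "\<not> p dvd s"
  shows "\<not> [y^2 = g * s^2] (mod p)"
proof
  assume y: "[y^2 = g * s^2] (mod p)"
  have "coprime s p"
    using p s by (metis prime_imp_coprime coprime_commute)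
  then obtain w where w: "[s * w = 1] (mod p)"
    using cong_solve_coprime_int by blast
  have "[(y * w)^2 = g * (s * w)^2] (mod p)"
    using cong_scalar_right[OF y, of "w^2"] by (simp add: power_mult_distrib mult.assoc)
  also have "[g * (s * w)^2 = g * 1^2] (mod p)"
    using w by (intro cong_scalar_left cong_pow)
  finally show False
    using g unfolding QuadRes_def by auto
qed

lemma nonsquare_unit_not_QuadRes:
  assumes p: "prime p" "p > 2" and \<Delta>: "nonsquare_unit p \<Delta>"
  shows "\<not> QuadRes p (\<Delta> 1)"
proof
  assume "QuadRes p (\<Delta> 1)"
  then obtain r where r: "[1 * r^2 = \<Delta> 1] (mod p)"
    unfolding QuadRes_def by auto
  have unit: "padic p \<Delta>" "\<not> p dvd \<Delta> 1"
    using \<Delta> by (simp_all add: nonsquare_unit_def padic_unit_def)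
  then have "\<not> p dvd r"
    using r by (metis cong_dvd_iff dvd_mult2 mult_1 power2_eq_square)
  moreover note padic_cong_Suc[OF unit(1)]
  moreover have "\<not> p dvd 1"
    using p(1) not_prime_unit by blast
  ultimately have "padic_square p \<Delta>"
    using hensel_lift[OF p, of 1 r \<Delta>] r unfolding padic_square_def by auto
  then show False
    using \<Delta> by (simp add: nonsquare_unit_def)
qed

lemma exists_unit_square_multiple_not_cong:
  fixes p a c :: int
  assumes p: "prime p" "p > 3" and a: "\<not> p dvd a"
  shows "\<exists>s. \<not> p dvd s \<and> \<not> [a * s^2 = c] (mod p)"
proof -
  have "\<not> p dvd 1" "\<not> p dvd 2" "\<not> p dvd 3"
    using p by (auto dest: zdvd_imp_le)
  then have "\<not> p dvd 3 * a"
    using p a by (simp add: prime_dvd_mult_iff)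
  then have "\<not> [a * 2^2 = a * 1^2] (mod p)"
    by (simp add: cong_iff_dvd_diff)
  then have "\<not> [a * 1^2 = c] (mod p) \<or> \<not> [a * 2^2 = c] (mod p)"
    by (meson cong_sym cong_trans)
  with \<open>\<not> p dvd 1\<close> \<open>\<not> p dvd 2\<close> show ?thesis by blast
qed

lemma anisotropic_mod_prime:
  fixes p a b x y :: int
  assumes p: "prime p" and nr: "\<not> QuadRes p (- (a * b))" and sol: "p dvd a * x^2 + b * y^2"
  shows "p dvd x \<and> p dvd y"
proof -
  have "[(a * x)^2 = - (a * b) * y^2] (mod p)"
    using dvd_mult[OF sol, of a] by (simp add: cong_iff_dvd_diff power2_eq_square algebra_simps)
  then have "p dvd y"
    using not_QuadRes_mult_square[OF p nr] by blast
  moreover have "\<not> p dvd a"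
    using not_QuadRes_imp_not_dvd[OF nr] by auto
  moreover from \<open>p dvd y\<close> have "p dvd b * y^2"
    by (simp add: power2_eq_square)
  ultimately have "p dvd x^2"
    using p sol by (simp add: dvd_add_left_iff prime_dvd_mult_iff)
  then show ?thesis
    using p \<open>p dvd y\<close> prime_dvd_power by blast
qed

lemma anisotropic_mod_prime_dvd_square:
  fixes p a b x y :: int
  assumes "prime p" "\<not> QuadRes p (- (a * b))" "p dvd a * x^2 + b * y^2"
  shows "p^2 dvd a * x^2 + b * y^2"
proof -
  have "p^2 dvd x^2" "p^2 dvd y^2"
    using anisotropic_mod_prime[OF assms] by (simp_all add: dvd_power_same)
  then show ?thesis
    by (simp add: dvd_add dvd_mult)
qed

lemma inj_on_square_mod_prime:
  fixes p c n :: int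
  assumes p: "prime p" and c: "\<not> p dvd c"
  shows "inj_on (\<lambda>x. (n + c * x^2) mod p) {0..(p - 1) div 2}"
proof (rule inj_onI)
  fix x y
  assume x: "x \<in> {0..(p - 1) div 2}" and y: "y \<in> {0..(p - 1) div 2}"
    and eq: "(n + c * x^2) mod p = (n + c * y^2) mod p"
  have "p dvd c * ((x - y) * (x + y))"
    using eq by (simp add: mod_eq_dvd_iff power2_eq_square algebra_simps)
  then have "p dvd x - y \<or> p dvd x + y"
    using p c by (simp add: prime_dvd_mult_iff)
  moreover have "\<bar>x - y\<bar> < p" "0 \<le> x + y" "x + y < p"
    using x y by auto
  moreover have "p > 0"
    using p prime_gt_0_int by blast
  ultimately show "x = y"
    using x y dvd_imp_le_int[of "x - y" p] dvd_imp_le_int[of "x + y" p] by force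
qed

lemma binary_form_represents_mod_prime:
  fixes p a b n :: int
  assumes p: "prime p" "p > 2" and a: "\<not> p dvd a" and b: "\<not> p dvd b"
  shows "\<exists>x y. [a * x^2 + b * y^2 = n] (mod p)"
proof (rule ccontr)
  assume none: "\<nexists>x y. [a * x^2 + b * y^2 = n] (mod p)"
  define H where "H = {0..(p - 1) div 2}"
  define f where "f = (\<lambda>x. (a * x^2) mod p)"
  define g where "g = (\<lambda>y. (n - b * y^2) mod p)"
  \<comment> \<open>pigeonhole: both images have \<open>(p + 1) / 2\<close> elements in \<open>{0..<p}\<close>, so they meet\<close>
  have "inj_on f H" "inj_on g H"
    using inj_on_square_mod_prime[OF p(1) a, of 0] inj_on_square_mod_prime[OF p(1), of "- b" n] b
    by (simp_all add: f_def g_def H_def)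
  have "f ` H \<inter> g ` H = {}"
  proof -
    have "f x \<noteq> g y" for x y
      using none unfolding f_def g_def cong_def by (auto simp: mod_eq_dvd_iff algebra_simps)
    then show ?thesis by blast
  qed
  then have "card (f ` H) + card (g ` H) = card (f ` H \<union> g ` H)"
    by (simp add: H_def card_Un_disjoint)
  also have "\<dots> \<le> card {0..<p}"
    using p by (intro card_mono) (auto simp: f_def g_def)
  finally have "2 * card H \<le> card {0..<p}"
    using card_image[OF \<open>inj_on f H\<close>] card_image[OF \<open>inj_on g H\<close>] by simp
  moreover have "odd p"
    using p prime_odd_int by auto
  ultimately show False
    using p by (auto simp: H_def elim!: oddE)
qed

lemma cong_solve_in_range:
  fixes u q n :: int
  assumes "coprime u q" "q > 0"
  obtains v where "0 \<le> v" "v < q" "[u * v = n] (mod q)"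
proof -
  obtain w where "[u * w = 1] (mod q)"
    using cong_solve_coprime_int assms(1) by blast
  then have "[u * ((w * n) mod q) = n] (mod q)"
    using cong_scalar_right[of "u * w" 1 q n] by (simp add: mult.assoc cong_def mod_mult_right_eq)
  then show thesis
    using that[of "(w * n) mod q"] assms(2) by simp
qed

lemma cong_prime_times_unit:
  fixes p m c :: int
  assumes p: "prime p" and m: "[m = p * c] (mod p^2)" and c: "\<not> p dvd c"
  shows "p dvd m" and "\<not> p^2 dvd m"
proof -
  have "[m = p * c] (mod p)"
    using m by (rule cong_dvd_modulus) simp
  then show "p dvd m"
    using cong_dvd_iff by fastforce
  show "\<not> p^2 dvd m"
  proof
    assume "p^2 dvd m"
    then have "p * p dvd p * c"
      using m cong_dvd_iff by (metis power2_eq_square)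
    moreover have "p \<noteq> 0"
      using p by auto
    ultimately show False
      using c by simp
  qed
qed

section \<open>Representations over Z_p\<close>

lemma zp_represents_Cons_iff:
  "zp_represents p (b # bs) n \<longleftrightarrow>
    (\<exists>x xs. padic p x \<and> length xs = length bs \<and> (\<forall>y\<in>set xs. padic p y) \<and>
      (\<forall>k. [b * x k ^ 2 + (\<Sum>i<length bs. bs ! i * (xs ! i) k ^ 2) = n] (mod p ^ k)))"
  (is "_ \<longleftrightarrow> (\<exists>x xs. ?sol x xs)")
proof
  assume "zp_represents p (b # bs) n"
  then obtain xs where xs: "length xs = Suc (length bs)" "\<forall>y\<in>set xs. padic p y"
    "\<forall>k. [(\<Sum>i<Suc (length bs). (b # bs) ! i * (xs ! i) k ^ 2) = n] (mod p ^ k)"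
    unfolding zp_represents_def by auto
  then obtain x xs' where "xs = x # xs'"
    by (cases xs) auto
  with xs have "?sol x xs'"
    by (simp del: sum.lessThan_Suc add: sum.lessThan_Suc_shift)
  then show "\<exists>x xs. ?sol x xs" by blast
next
  assume "\<exists>x xs. ?sol x xs"
  then obtain x xs where "?sol x xs" by blast
  then show "zp_represents p (b # bs) n"
    unfolding zp_represents_def
    by (intro exI[of _ "x # xs"]) (simp del: sum.lessThan_Suc add: sum.lessThan_Suc_shift)
qed

lemma zp_represents_1_iff:
  "zp_represents p [b] n \<longleftrightarrow> (\<exists>x. padic p x \<and> (\<forall>k. [b * x k ^ 2 = n] (mod p ^ k)))"
  by (simp add: zp_represents_Cons_iff)

lemma zp_represents_2_iff:
  "zp_represents p [a, b] n \<longleftrightarrow>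
    (\<exists>x y. padic p x \<and> padic p y \<and> (\<forall>k. [a * x k ^ 2 + b * y k ^ 2 = n] (mod p ^ k)))"
  by (force simp: zp_represents_Cons_iff length_Suc_conv)

lemma zp_represents_Cons_zero:
  assumes "p > 0" "zp_represents p bs n"
  shows "zp_represents p (b # bs) n"
proof -
  obtain xs where "length xs = length bs" "\<forall>y\<in>set xs. padic p y"
    "\<forall>k. [(\<Sum>i<length bs. bs ! i * (xs ! i) k ^ 2) = n] (mod p ^ k)"
    using assms(2) unfolding zp_represents_def by blast
  moreover have "padic p (\<lambda>k. 0)"
    using padic_zp_of_int[OF assms(1), of 0] by (simp add: zp_of_int_def)
  ultimately show ?thesis
    unfolding zp_represents_Cons_iff by (intro exI[of _ "\<lambda>k. 0"] exI[of _ xs]) simp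
qed

lemma zp_represents_swap:
  assumes "zp_represents p (a # b # bs) n"
  shows "zp_represents p (b # a # bs) n"
proof -
  obtain x xs where x: "padic p x" "length xs = Suc (length bs)" "\<forall>z\<in>set xs. padic p z"
    "\<forall>k. [a * x k ^ 2 + (\<Sum>i<Suc (length bs). (b # bs) ! i * (xs ! i) k ^ 2) = n] (mod p ^ k)"
    using assms unfolding zp_represents_Cons_iff by auto
  then obtain y ys where "xs = y # ys"
    by (cases xs) auto
  with x show ?thesis
    unfolding zp_represents_Cons_iff
    by (intro exI[of _ y] exI[of _ "x # ys"])
      (auto simp del: sum.lessThan_Suc simp: sum.lessThan_Suc_shift add_ac)
qed

lemma zp_represents_scale:
  assumes "zp_represents p bs n"
  shows "zp_represents p (map ((*) c) bs) (c * n)"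
proof -
  obtain xs where xs: "length xs = length bs" "\<forall>y\<in>set xs. padic p y"
    "\<forall>k. [(\<Sum>i<length bs. bs ! i * (xs ! i) k ^ 2) = n] (mod p ^ k)"
    using assms unfolding zp_represents_def by blast
  then have "[(\<Sum>i<length bs. c * bs ! i * (xs ! i) k ^ 2) = c * n] (mod p ^ k)" for k
    using cong_scalar_left[OF xs(3)[rule_format, of k], of c]
    by (simp add: sum_distrib_left mult.assoc)
  with xs show ?thesis
    unfolding zp_represents_def by (intro exI[of _ xs]) simp
qed

lemma zp_represents_1_by_hensel:
  assumes "prime p" "p > 2" "\<not> p dvd b" "\<not> p dvd r" "[b * r^2 = n] (mod p)"
  shows "zp_represents p [b] n"
  using hensel_lift[of p b r "\<lambda>k. n"] assms unfolding zp_represents_1_iff by auto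

lemma zp_represents_2_by_hensel:
  assumes p: "prime p" "p > 2" and "\<not> p dvd b" "\<not> p dvd y"
    and sol: "[a * x^2 + b * y^2 = n] (mod p)"
  shows "zp_represents p [a, b] n"
proof -
  have "[b * y^2 = n - a * x^2] (mod p)"
    using sol by (simp add: cong_iff_dvd_diff algebra_simps)
  then obtain z where z: "padic p z" "\<forall>k. [b * z k ^ 2 = n - a * x^2] (mod p ^ k)"
    using assms zp_represents_1_by_hensel unfolding zp_represents_1_iff by blast
  have "[a * zp_of_int p x k ^ 2 + b * z k ^ 2 = a * x^2 + (n - a * x^2)] (mod p ^ k)" for k
    using z(2) by (intro cong_add cong_scalar_left cong_pow) (auto simp: zp_of_int_def cong_def)
  then show ?thesis
    unfolding zp_represents_2_iff using z(1) padic_zp_of_int[of p x] p by auto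
qed

lemma zp_represents_binary_unimodular:
  assumes p: "prime p" "p > 2" and a: "\<not> p dvd a" and b: "\<not> p dvd b" and n: "\<not> p dvd n"
  shows "zp_represents p [a, b] n"
proof -
  obtain x y where sol: "[a * x^2 + b * y^2 = n] (mod p)"
    using binary_form_represents_mod_prime[OF p a b] by blast
  show ?thesis
  proof (cases "p dvd y")
    case False
    then show ?thesis by (rule zp_represents_2_by_hensel[OF p b _ sol])
  next
    case True
    have "\<not> p dvd x"
    proof
      assume "p dvd x"
      with True have "p dvd a * x^2 + b * y^2"
        by (simp add: power2_eq_square)
      with sol n show False
        using cong_dvd_iff by blast
    qed
    moreover have "[b * y^2 + a * x^2 = n] (mod p)"
      using sol by (simp add: add.commute)
    ultimately show ?thesis
      using zp_represents_2_by_hensel[OF p a] zp_represents_swap by blast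
  qed
qed

lemma not_zp_represents_anisotropic:
  assumes p: "prime p" and nr: "\<not> QuadRes p (- (a * b))" and n: "p dvd n" "\<not> p^2 dvd n"
  shows "\<not> zp_represents p [a, b] n"
proof
  assume "zp_represents p [a, b] n"
  then obtain x y where "\<forall>k. [a * x k ^ 2 + b * y k ^ 2 = n] (mod p ^ k)"
    unfolding zp_represents_2_iff by blast
  then have sol: "[a * x 2 ^ 2 + b * y 2 ^ 2 = n] (mod p^2)"
    by blast
  then have "[a * x 2 ^ 2 + b * y 2 ^ 2 = n] (mod p)"
    by (rule cong_dvd_modulus) simp
  then have "p dvd a * x 2 ^ 2 + b * y 2 ^ 2"
    using n(1) cong_dvd_iff by blast
  then show False
    using anisotropic_mod_prime_dvd_square[OF p nr] sol n(2) cong_dvd_iff by blast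
qed

lemma not_zp_represents_mod_prime:
  assumes a: "p dvd a" and n: "\<And>y. \<not> [b * y^2 = n] (mod p)"
  shows "\<not> zp_represents p [a, b] n"
proof
  assume "zp_represents p [a, b] n"
  then obtain x y where "\<forall>k. [a * x k ^ 2 + b * y k ^ 2 = n] (mod p ^ k)"
    unfolding zp_represents_2_iff by blast
  then have "[a * x 1 ^ 2 + b * y 1 ^ 2 = n] (mod p)"
    by (metis power_one_right)
  moreover have "[b * y 1 ^ 2 = a * x 1 ^ 2 + b * y 1 ^ 2] (mod p)"
    using a by (simp add: cong_iff_dvd_diff)
  ultimately show False
    using n cong_trans by blast
qed

section \<open>Invariants of the isometry\<close>

lemma det3_cong:
  assumes "\<And>i j. i < 3 \<Longrightarrow> j < 3 \<Longrightarrow> [M i j = N i j] (mod q)"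
  shows "[det3 M = det3 N] (mod q)"
  unfolding det3_def by (intro cong_add cong_diff cong_mult) (auto intro: assms)

lemma det3_gram_diag:
  fixes T :: "nat \<Rightarrow> nat \<Rightarrow> int" and a :: "nat \<Rightarrow> int"
  shows "det3 (\<lambda>i j. \<Sum>l<3. T l i * a l * T l j) = det3 T ^ 2 * (a 0 * a 1 * a 2)"
  by (simp add: det3_def eval_nat_numeral power2_eq_square algebra_simps)

lemma gram_diag_minor:
  fixes T :: "nat \<Rightarrow> nat \<Rightarrow> int" and a :: "nat \<Rightarrow> int"
  shows "(\<Sum>l<3. T l 0 * a l * T l 0) * (\<Sum>l<3. T l 1 * a l * T l 1) - (\<Sum>l<3. T l 0 * a l * T l 1)^2
    = a 0 * a 1 * (T 0 0 * T 1 1 - T 1 0 * T 0 1)^2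
      + a 2 * (a 0 * (T 0 0 * T 2 1 - T 2 0 * T 0 1)^2 + a 1 * (T 1 0 * T 2 1 - T 2 0 * T 1 1)^2)"
  by (simp add: eval_nat_numeral power2_eq_square algebra_simps)

lemma gram_diag_det_cong:
  fixes T :: "nat \<Rightarrow> nat \<Rightarrow> int" and a b :: "nat \<Rightarrow> int"
  assumes "\<And>i j. i < 3 \<Longrightarrow> j < 3 \<Longrightarrow>
    [(\<Sum>l<3. T l i * a l * T l j) = (if i = j then b i else 0)] (mod q)"
  shows "[det3 T ^ 2 * (a 0 * a 1 * a 2) = b 0 * b 1 * b 2] (mod q)"
proof -
  have "[det3 (\<lambda>i j. \<Sum>l<3. T l i * a l * T l j) = det3 (\<lambda>i j. if i = j then b i else 0)] (mod q)"
    using assms by (rule det3_cong)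
  moreover have "det3 (\<lambda>i j. if i = j then b i else 0) = b 0 * b 1 * b 2"
    by (simp add: det3_def)
  ultimately show ?thesis
    by (simp only: det3_gram_diag)
qed

lemma gram_diag_minor_cong:
  fixes T :: "nat \<Rightarrow> nat \<Rightarrow> int" and a b :: "nat \<Rightarrow> int"
  assumes "\<And>i j. i < 3 \<Longrightarrow> j < 3 \<Longrightarrow>
    [(\<Sum>l<3. T l i * a l * T l j) = (if i = j then b i else 0)] (mod q)"
  shows "\<exists>m r. [a 0 * a 1 * m^2 + a 2 * r = b 0 * b 1] (mod q)"
proof -
  have "[(\<Sum>l<3. T l 0 * a l * T l 0) * (\<Sum>l<3. T l 1 * a l * T l 1) - (\<Sum>l<3. T l 0 * a l * T l 1)^2
      = b 0 * b 1 - 0^2] (mod q)"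
    using assms[of 0 0] assms[of 1 1] assms[of 0 1] by (intro cong_diff cong_mult cong_pow) simp_all
  then show ?thesis
    unfolding gram_diag_minor by auto
qed

lemma zp_isometric3_of_int:
  assumes "zp_isometric3 p (\<lambda>i. zp_of_int p (a i)) b"
  obtains T where "\<And>i j. i < 3 \<Longrightarrow> j < 3 \<Longrightarrow> padic p (T i j)"
    and "\<not> p dvd det3 (\<lambda>i j. T i j 1)"
    and "\<And>i j k. i < 3 \<Longrightarrow> j < 3 \<Longrightarrow>
      [(\<Sum>l<3. T l i k * a l * T l j k) = (if i = j then b i k else 0)] (mod p ^ k)"
proof -
  obtain T where T: "\<forall>i<3. \<forall>j<3. padic p (T i j)" "\<not> p dvd det3 (\<lambda>i j. T i j 1)"
    "\<forall>i<3. \<forall>j<3. \<forall>k. [(\<Sum>l<3. T l i k * zp_of_int p (a l) k * T l j k)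
        = (if i = j then b i k else 0)] (mod p ^ k)"
    using assms unfolding zp_isometric3_def by blast
  have of_int: "[(\<Sum>l<3. T l i k * a l * T l j k) = (\<Sum>l<3. T l i k * zp_of_int p (a l) k * T l j k)] (mod p ^ k)"
    for i j k
    by (intro cong_sum cong_mult cong_refl) (simp add: zp_of_int_def cong_def)
  have "[(\<Sum>l<3. T l i k * a l * T l j k) = (if i = j then b i k else 0)] (mod p ^ k)"
    if "i < 3" "j < 3" for i j k
    using cong_trans[OF of_int] T(3) that by blast
  with T(1,2) show ?thesis
    using that by blast
qed

lemma isometric_to_aniso_ramified_det:
  fixes p a1 a2 a3 :: int
  assumes p: "prime p" and \<Delta>: "padic p \<Delta>" "\<not> p dvd \<Delta> 1" and \<epsilon>: "padic_unit p \<epsilon>"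
    and iso: "zp_isometric3 p (\<lambda>i. zp_of_int p ([a1, a2, a3] ! i)) (\<lambda>i k. [1, - \<Delta> k, p * \<epsilon> k] ! i)"
  shows "p dvd a1 * a2 * a3" and "\<not> p^2 dvd a1 * a2 * a3"
proof -
  obtain T where T: "\<And>i j. i < 3 \<Longrightarrow> j < 3 \<Longrightarrow> padic p (T i j)" "\<not> p dvd det3 (\<lambda>i j. T i j 1)"
    "\<And>i j k. i < 3 \<Longrightarrow> j < 3 \<Longrightarrow> [(\<Sum>l<3. T l i k * [a1, a2, a3] ! l * T l j k)
       = (if i = j then [1, - \<Delta> k, p * \<epsilon> k] ! i else 0)] (mod p ^ k)"
    using zp_isometric3_of_int[OF iso] by blast
  define D where "D = det3 (\<lambda>i j. T i j 2)"
  have "[D^2 * ([a1, a2, a3] ! 0 * [a1, a2, a3] ! 1 * [a1, a2, a3] ! 2)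
      = [1, - \<Delta> 2, p * \<epsilon> 2] ! 0 * [1, - \<Delta> 2, p * \<epsilon> 2] ! 1 * [1, - \<Delta> 2, p * \<epsilon> 2] ! 2] (mod p^2)"
    unfolding D_def by (rule gram_diag_det_cong) (rule T(3))
  then have det: "[D^2 * (a1 * a2 * a3) = p * - (\<Delta> 2 * \<epsilon> 2)] (mod p^2)"
    by (simp add: algebra_simps)
  have "[D = det3 (\<lambda>i j. T i j 1)] (mod p)"
    unfolding D_def using T(1) padic_cong_Suc[of p _ 1] by (intro det3_cong) (simp add: numeral_2_eq_2)
  then have D: "\<not> p dvd D"
    using T(2) cong_dvd_iff by blast
  have "[\<Delta> 2 = \<Delta> 1] (mod p)" "[\<epsilon> 2 = \<epsilon> 1] (mod p)"
    using padic_cong_Suc[OF \<Delta>(1), of 1] padic_cong_Suc[of p \<epsilon> 1] \<epsilon>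
    by (simp_all add: numeral_2_eq_2 padic_unit_def)
  moreover have "\<not> p dvd \<epsilon> 1"
    using \<epsilon> by (simp add: padic_unit_def)
  ultimately have unit: "\<not> p dvd \<Delta> 2 * \<epsilon> 2"
    using p \<Delta>(2) cong_dvd_iff by (metis prime_dvd_mult_iff)
  have "[D^2 * (a1 * a2 * a3) = p * - (\<Delta> 2 * \<epsilon> 2)] (mod p)"
    using det by (rule cong_dvd_modulus) simp
  then have "p dvd D^2 * (a1 * a2 * a3)"
    using cong_dvd_iff dvd_triv_left by blast
  then show "p dvd a1 * a2 * a3"
    using p D by (simp add: prime_dvd_mult_iff prime_dvd_power_iff)
  show "\<not> p^2 dvd a1 * a2 * a3"
  proof
    assume "p^2 dvd a1 * a2 * a3"
    then have "p^2 dvd p * - (\<Delta> 2 * \<epsilon> 2)"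
      using det cong_dvd_iff dvd_mult by blast
    then show False
      using unit p by (simp add: power2_eq_square)
  qed
qed

lemma isometric_to_aniso_ramified_minor:
  fixes p a1 a2 a3 :: int
  assumes \<Delta>: "\<not> QuadRes p (\<Delta> 1)" and a3: "p dvd a3"
    and iso: "zp_isometric3 p (\<lambda>i. zp_of_int p ([a1, a2, a3] ! i)) (\<lambda>i k. [1, - \<Delta> k, p * \<epsilon> k] ! i)"
  shows "\<not> QuadRes p (- (a1 * a2))"
proof
  obtain T :: "nat \<Rightarrow> nat \<Rightarrow> nat \<Rightarrow> int"
    where "\<And>i j. i < 3 \<Longrightarrow> j < 3 \<Longrightarrow> padic p (T i j)" and "\<not> p dvd det3 (\<lambda>i j. T i j 1)"
    and T: "\<And>i j k. i < 3 \<Longrightarrow> j < 3 \<Longrightarrow> [(\<Sum>l<3. T l i k * [a1, a2, a3] ! l * T l j k)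
       = (if i = j then [1, - \<Delta> k, p * \<epsilon> k] ! i else 0)] (mod p ^ k)"
    using zp_isometric3_of_int[OF iso] by blast
  have "\<exists>m r. [[a1, a2, a3] ! 0 * [a1, a2, a3] ! 1 * m^2 + [a1, a2, a3] ! 2 * r
      = [1, - \<Delta> 1, p * \<epsilon> 1] ! 0 * [1, - \<Delta> 1, p * \<epsilon> 1] ! 1] (mod p ^ 1)"
    using T by (intro gram_diag_minor_cong[of "\<lambda>l i. T l i 1" "\<lambda>i. [a1, a2, a3] ! i"
        "\<lambda>i. [1, - \<Delta> 1, p * \<epsilon> 1] ! i" "p ^ 1"])
  then obtain m r where "[a1 * a2 * m^2 + a3 * r = - \<Delta> 1] (mod p)"
    by auto
  moreover have "[a1 * a2 * m^2 + a3 * r = a1 * a2 * m^2] (mod p)"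
    using a3 by (simp add: cong_iff_dvd_diff)
  ultimately have "[a1 * a2 * m^2 = - \<Delta> 1] (mod p)"
    by (meson cong_sym cong_trans)
  then have m: "[- (a1 * a2) * m^2 = \<Delta> 1] (mod p)"
    using cong_minus_minus_iff by fastforce
  assume "QuadRes p (- (a1 * a2))"
  then obtain y where "[y^2 = - (a1 * a2)] (mod p)"
    unfolding QuadRes_def by blast
  then have "[(y * m)^2 = \<Delta> 1] (mod p)"
    using cong_trans[OF cong_scalar_right m] by (simp add: power_mult_distrib)
  with \<Delta> show False
    unfolding QuadRes_def by blast
qed

lemma isometric_to_aniso_ramified_cases:
  fixes p a1 a2 a3 :: int
  assumes p: "prime p" "p > 2" and \<Delta>: "nonsquare_unit p \<Delta>" and \<epsilon>: "padic_unit p \<epsilon>"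
    and iso: "zp_isometric3 p (\<lambda>i. zp_of_int p ([a1, a2, a3] ! i)) (\<lambda>i k. [1, - \<Delta> k, p * \<epsilon> k] ! i)"
  obtains (last) "p dvd a3" "\<not> p^2 dvd a3" "\<not> QuadRes p (- (a1 * a2))"
    | (first) "p dvd a1" "\<not> p dvd a2" "\<not> p dvd a3"
    | (second) "p dvd a2" "\<not> p dvd a1" "\<not> p dvd a3"
proof -
  have nr: "\<not> QuadRes p (\<Delta> 1)"
    using nonsquare_unit_not_QuadRes[OF p \<Delta>] .
  have "padic p \<Delta>" "\<not> p dvd \<Delta> 1"
    using \<Delta> by (simp_all add: nonsquare_unit_def padic_unit_def)
  note ord = isometric_to_aniso_ramified_det[OF p(1) this \<epsilon> iso]
  have not_both: "\<not> (p dvd x \<and> p dvd y)" if "a1 * a2 * a3 = x * y * z" for x y z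
    using ord(2) that by (metis dvd_mult2 mult_dvd_mono power2_eq_square)
  consider (dvd_a3) "p dvd a3" | (dvd_a1) "p dvd a1" | (dvd_a2) "p dvd a2"
    using ord(1) p(1) by (auto simp: prime_dvd_mult_iff)
  then show thesis
  proof cases
    case dvd_a3
    moreover have "\<not> p^2 dvd a3"
      using ord(2) by (metis dvd_mult)
    ultimately show thesis
      using last isometric_to_aniso_ramified_minor[OF nr dvd_a3 iso] by blast
  next
    case dvd_a1
    then show thesis
      using first not_both[of a1 a2 a3] not_both[of a1 a3 a2] by (auto simp: ac_simps)
  next
    case dvd_a2
    then show thesis
      using second not_both[of a1 a2 a3] not_both[of a2 a3 a1] by (auto simp: ac_simps)
  qed
qed

section \<open>Choosing the shift\<close>

lemma exists_shift_p_dvd_last: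
  fixes p u a1 a2 a3 \<alpha>1 \<alpha>2 \<alpha>3 :: int
  assumes p: "prime p" "p > 3" and u: "coprime u p"
    and a3: "p dvd a3" "\<not> p^2 dvd a3" and nr: "\<not> QuadRes p (- (a1 * a2))"
  obtains v where "0 < v" "v < p^2"
    "\<not> zp_represents p [a1, a2] (u * v + a1 * \<alpha>1^2 + a2 * \<alpha>2^2)"
    "zp_represents p [a1, a2, a3] (u * v + a1 * \<alpha>1^2 + a2 * \<alpha>2^2 + a3 * \<alpha>3^2)"
    "multiplicity p (u * v + a1 * \<alpha>1^2 + a2 * \<alpha>2^2) = 1"
    "multiplicity p (u * v + a1 * \<alpha>1^2 + a2 * \<alpha>2^2 + a3 * \<alpha>3^2) = 1"
proof -
  define S where "S = a1 * \<alpha>1^2 + a2 * \<alpha>2^2"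
  obtain b where b: "a3 = p * b"
    using a3(1) by (rule dvdE)
  have "\<not> p dvd b"
    using a3(2) by (auto simp: b power2_eq_square)
  then obtain r where r: "\<not> p dvd r" "\<not> [b * r^2 = b * \<alpha>3^2] (mod p)"
    using exists_unit_square_multiple_not_cong[OF p] by blast
  define t where "t = b * (r^2 - \<alpha>3^2)"
  have t: "\<not> p dvd t"
    using r(2) by (simp add: t_def cong_iff_dvd_diff right_diff_distrib)
  have "coprime u (p^2)"
    using u by simp
  then obtain v where v: "0 \<le> v" "v < p^2" "[u * v = p * t - S] (mod p^2)"
    using cong_solve_in_range p by (metis zero_less_power prime_gt_0_int)
  have n2: "[u * v + S = p * t] (mod p^2)"
    using cong_add[OF v(3) cong_refl[of S]] by simp
  have n3: "[u * v + S + a3 * \<alpha>3^2 = p * (b * r^2)] (mod p^2)"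
    using cong_add[OF n2 cong_refl[of "a3 * \<alpha>3^2"]] by (simp add: b t_def algebra_simps)
  have "\<not> p dvd b * r^2"
    using p \<open>\<not> p dvd b\<close> r(1) by (simp add: prime_dvd_mult_iff prime_dvd_power_iff)
  note ord2 = cong_prime_times_unit[OF p(1) n2 t]
    and ord3 = cong_prime_times_unit[OF p(1) n3 this]
  have "v \<noteq> 0"
  proof
    assume "v = 0"
    then have "[S = p * t] (mod p^2)"
      using n2 by simp
    then show False
      using cong_prime_times_unit[OF p(1) _ t] anisotropic_mod_prime_dvd_square[OF p(1) nr]
      unfolding S_def by blast
  qed
  have "\<not> zp_represents p [a1, a2] (u * v + S)"
    using not_zp_represents_anisotropic[OF p(1) nr ord2] .
  moreover have "zp_represents p [a1, a2, a3] (u * v + S + a3 * \<alpha>3^2)"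
  proof -
    obtain n' where n': "u * v + S + a3 * \<alpha>3^2 = p * n'"
      using ord3(1) by (rule dvdE)
    have "p * p dvd p * (n' - b * r^2)"
      using n3 unfolding n' by (simp add: cong_iff_dvd_diff power2_eq_square right_diff_distrib)
    then have "[b * r^2 = n'] (mod p)"
      using p by (simp add: cong_iff_dvd_diff dvd_diff_commute)
    then have "zp_represents p [b] n'"
      using zp_represents_1_by_hensel p \<open>\<not> p dvd b\<close> r(1) by simp
    then have "zp_represents p [p * b] (p * n')"
      using zp_represents_scale[of p "[b]" n' p] by simp
    then have "zp_represents p [a3] (u * v + S + a3 * \<alpha>3^2)"
      unfolding n' using b by simp
    then show ?thesis
      using zp_represents_Cons_zero p by simp
  qed
  moreover have "multiplicity p (u * v + S) = 1" "multiplicity p (u * v + S + a3 * \<alpha>3^2) = 1"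
    using ord2 ord3 by (auto intro!: multiplicity_eqI simp: numeral_2_eq_2)
  moreover have "0 < v"
    using v(1) \<open>v \<noteq> 0\<close> by simp
  ultimately show thesis
    using that[of v] v(2) unfolding S_def by (simp add: add.assoc)
qed

lemma exists_shift_p_dvd_first:
  fixes p u a1 a2 a3 g S c :: int
  assumes p: "prime p" "p > 3" and u: "coprime u p"
    and a: "p dvd a1" "\<not> p dvd a2" "\<not> p dvd a3" and g: "\<not> QuadRes p g"
  obtains v where "0 < v" "v < p^2"
    "\<not> zp_represents p [a1, a2] (u * v + S)" "zp_represents p [a1, a2, a3] (u * v + S + c)"
    "multiplicity p (u * v + S) = 0" "multiplicity p (u * v + S + c) = 0"
proof -
  have "\<not> p dvd a2 * g"
    using p a(2) not_QuadRes_imp_not_dvd[OF g] by (simp add: prime_dvd_mult_iff)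
  then obtain s where s: "\<not> p dvd s" "\<not> [a2 * g * s^2 = - c] (mod p)"
    using exists_unit_square_multiple_not_cong[OF p] by blast
  define t where "t = a2 * g * s^2"
  have t: "\<not> [a2 * y^2 = t] (mod p)" for y
  proof
    assume "[a2 * y^2 = t] (mod p)"
    moreover have "coprime a2 p"
      using p a(2) by (metis prime_imp_coprime coprime_commute)
    ultimately have "[y^2 = g * s^2] (mod p)"
      unfolding t_def by (simp add: cong_mult_lcancel mult.assoc)
    with not_QuadRes_mult_square[OF p(1) g s(1)] show False ..
  qed
  have "\<not> p dvd t"
    using t[of 0] by (metis cong_0_iff cong_sym mult_zero_right power_zero_numeral)
  obtain v0 where v0: "0 \<le> v0" "v0 < p" "[u * v0 = t - S] (mod p)"
    using cong_solve_in_range[OF u] p by auto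
  define v where "v = v0 + p"
  have "[u * v = u * v0] (mod p)"
    by (simp add: v_def cong_iff_dvd_diff algebra_simps)
  then have "[u * v + S = (t - S) + S] (mod p)"
    using v0(3) by (intro cong_add cong_refl) (rule cong_trans)
  then have n: "[u * v + S = t] (mod p)"
    by simp
  have "2 * p < p * p"
    using p by (intro mult_strict_right_mono) auto
  then have v: "0 < v" "v < p^2"
    unfolding v_def power2_eq_square using v0 p by linarith+
  have "[u * v + S + c = t + c] (mod p)"
    using n by (rule cong_add) simp
  moreover have "\<not> p dvd t + c"
    using s(2) by (simp add: t_def cong_iff_dvd_diff)
  ultimately have unit: "\<not> p dvd u * v + S" "\<not> p dvd u * v + S + c"
    using n \<open>\<not> p dvd t\<close> cong_dvd_iff by blast+
  have "\<not> zp_represents p [a1, a2] (u * v + S)"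
    using not_zp_represents_mod_prime[OF a(1)] t n by (meson cong_trans)
  moreover have "zp_represents p [a1, a2, a3] (u * v + S + c)"
    using zp_represents_binary_unimodular[OF p(1) _ a(2,3) unit(2)] zp_represents_Cons_zero p by simp
  ultimately show thesis
    using that v unit by (simp add: not_dvd_imp_multiplicity_0)
qed

theorem lemma2p4:
  fixes p u a1 a2 a3 \<alpha>1 \<alpha>2 \<alpha>3 :: int
  assumes "prime p" and "p > 3"
    and "u > 0" and "coprime u p"
    and "a1 > 0" and "a2 > 0" and "a3 > 0"
    and "\<alpha>1 > 0" and "\<alpha>2 > 0" and "\<alpha>3 > 0"
    and "\<exists>\<Delta> \<epsilon>. nonsquare_unit p \<Delta> \<and> padic_unit p \<epsilon> \<and>
           zp_isometric3 p
             (\<lambda>i. zp_of_int p ([a1, a2, a3] ! i))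
             (\<lambda>i k. [1, - \<Delta> k, p * \<epsilon> k] ! i)"
  shows "\<exists>v::int. 0 < v \<and> v < p ^ 2 \<and>
     \<not> zp_represents p [a1, a2] (u * v + a1 * \<alpha>1 ^ 2 + a2 * \<alpha>2 ^ 2) \<and>
     zp_represents p [a1, a2, a3] (u * v + a1 * \<alpha>1 ^ 2 + a2 * \<alpha>2 ^ 2 + a3 * \<alpha>3 ^ 2) \<and>
     max (multiplicity p (u * v + a1 * \<alpha>1 ^ 2 + a2 * \<alpha>2 ^ 2))
         (multiplicity p (u * v + a1 * \<alpha>1 ^ 2 + a2 * \<alpha>2 ^ 2 + a3 * \<alpha>3 ^ 2)) \<le> 1"
proof -
  note p = assms(1,2) and u = assms(4)
  obtain \<Delta> \<epsilon> where \<Delta>: "nonsquare_unit p \<Delta>" and \<epsilon>: "padic_unit p \<epsilon>"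
    and iso: "zp_isometric3 p (\<lambda>i. zp_of_int p ([a1, a2, a3] ! i)) (\<lambda>i k. [1, - \<Delta> k, p * \<epsilon> k] ! i)"
    using assms(11) by blast
  have "p > 2"
    using p by simp
  then have nr: "\<not> QuadRes p (\<Delta> 1)"
    using nonsquare_unit_not_QuadRes p(1) \<Delta> by blast
  from p(1) \<open>p > 2\<close> \<Delta> \<epsilon> iso show ?thesis
  proof (cases rule: isometric_to_aniso_ramified_cases)
    case last
    then show ?thesis
      by (rule exists_shift_p_dvd_last[OF p u]) auto
  next
    case first
    then show ?thesis
      by (rule exists_shift_p_dvd_first[OF p u _ _ _ nr,
          where S = "a1 * \<alpha>1^2 + a2 * \<alpha>2^2" and c = "a3 * \<alpha>3^2"]) (auto simp: add.assoc)
  next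
    case second
    then show ?thesis
      by (rule exists_shift_p_dvd_first[OF p u _ _ _ nr,
          where S = "a1 * \<alpha>1^2 + a2 * \<alpha>2^2" and c = "a3 * \<alpha>3^2"])
        (auto simp: add.assoc dest: zp_represents_swap)
  qed
qed

end
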